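(* Let $A$ be a noetherian commutative $\mathbb{N}$-graded ring, $\mathfrak m=A_+=\bigoplus_{\nu>0}A_\nu$, and $I=(a_1,\dots,a_n)$ an ideal of $A$ with $\sqrt I=\sqrt{\mathfrak m}$. Suppose $\sigma:=\mathrm{depth}_{\mathfrak m}(A)\ge1$. Then $H_i(\mathcal Z_\bullet)=0$ for all $i\ge\max(1,n-\sigma)$, where $\mathcal Z_\bullet$ is the approximation complex associated to $a_1,\dots,a_n$. In particular, if $n\ge2$ and $\mathrm{depth}_{\mathfrak m}(A)\ge n-1$, then $\mathcal Z_\bullet$ is acyclic (i.e. $H_i(\mathcal Z_\bullet)=0$ for all $i\ge1$).
   Context: Approximation complex: let $A[\mathbf T]=A[T_1,\dots,T_n]$. Let $K_\bullet(\mathbf a;A)$ be the Koszul complex of $a_1,\dots,a_n$, $K_i=\wedge^iA^n$, with differential $d_{\mathbf a}$, and $Z_i=\ker(d_{\mathbf a}:K_i\to K_{i-1})$. Let $d_{\mathbf T}$ be the Koszul differential of $T_1,\dots,T_n$ on $K_\bullet\otimes_AA[\mathbf T]$; since $d_{\mathbf a}d_{\mathbf T}+d_{\mathbf T}d_{\mathbf a}=0$, $d_{\mathbf T}$ restricts to a complex $\mathcal{Z}_\bullet$ with $\mathcal{Z}_i=Z_i\otimes_AA[\mathbf T]$. $\mathrm{depth}_{\mathfrak a}(A)$ denotes the grade of the ideal $\mathfrak a$ on $A$. *)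

theory Defs
  imports Main "HOL-Library.Extended_Nat"
begin

definition is_ideal :: "'a::comm_ring_1 set \<Rightarrow> bool" where
  "is_ideal J \<longleftrightarrow> 0 \<in> J \<and> (\<forall>x\<in>J. \<forall>y\<in>J. x + y \<in> J) \<and> (\<forall>r. \<forall>x\<in>J. r * x \<in> J)"

definition ideal_gen :: "'a::comm_ring_1 set \<Rightarrow> 'a set" where
  "ideal_gen F = \<Inter>{J. is_ideal J \<and> F \<subseteq> J}"

definition noetherian_ring :: "'a::comm_ring_1 itself \<Rightarrow> bool" where
  "noetherian_ring _ \<longleftrightarrow> (\<forall>J::'a set. is_ideal J \<longrightarrow> (\<exists>F. finite F \<and> J = ideal_gen F))"

definition radical :: "'a::comm_ring_1 set \<Rightarrow> 'a set" where
  "radical J = {x. \<exists>k::nat. x ^ k \<in> J}"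

text \<open>G nu is the homogeneous component of degree nu; A is the internal direct sum.\<close>
definition nat_graded :: "(nat \<Rightarrow> 'a::comm_ring_1 set) \<Rightarrow> bool" where
  "nat_graded G \<longleftrightarrow>
     (\<forall>\<nu>. 0 \<in> G \<nu> \<and> (\<forall>x\<in>G \<nu>. \<forall>y\<in>G \<nu>. x + y \<in> G \<nu>) \<and> (\<forall>x\<in>G \<nu>. - x \<in> G \<nu>)) \<and>
     1 \<in> G 0 \<and>
     (\<forall>\<mu> \<nu>. \<forall>x\<in>G \<mu>. \<forall>y\<in>G \<nu>. x * y \<in> G (\<mu> + \<nu>)) \<and>
     (\<forall>x. \<exists>c. finite {\<nu>. c \<nu> \<noteq> 0} \<and> (\<forall>\<nu>. c \<nu> \<in> G \<nu>) \<and> x = sum c {\<nu>. c \<nu> \<noteq> 0}) \<and>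
     (\<forall>c. finite {\<nu>. c \<nu> \<noteq> 0} \<and> (\<forall>\<nu>. c \<nu> \<in> G \<nu>) \<and> sum c {\<nu>. c \<nu> \<noteq> 0} = 0 \<longrightarrow> (\<forall>\<nu>. c \<nu> = 0))"

definition irrelevant_ideal :: "(nat \<Rightarrow> 'a::comm_ring_1 set) \<Rightarrow> 'a set" where
  "irrelevant_ideal G = {x. \<exists>c. finite {\<nu>. c \<nu> \<noteq> 0} \<and> (\<forall>\<nu>. c \<nu> \<in> G \<nu>) \<and> c 0 = 0 \<and>
                               x = sum c {\<nu>. c \<nu> \<noteq> 0}}"

definition regular_seq :: "'a::comm_ring_1 list \<Rightarrow> bool" where
  "regular_seq xs \<longleftrightarrow>
     (\<forall>i<length xs. \<forall>y. xs ! i * y \<in> ideal_gen (set (take i xs)) \<longrightarrow> y \<in> ideal_gen (set (take i xs)))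
     \<and> ideal_gen (set xs) \<noteq> UNIV"

definition grade :: "'a::comm_ring_1 set \<Rightarrow> enat" where
  "grade J = Sup {enat (length xs) | xs. set xs \<subseteq> J \<and> regular_seq xs}"

text \<open>An element of K_i(a;A) is a coefficient function on i-subsets of {0..<n}
  (basis e_S). An element of K_i tensor A[T] is a coefficient function on pairs (S, alpha),
  alpha a monomial exponent supported in {0..<n}, with finite support.\<close>

definition ksign :: "nat set \<Rightarrow> nat \<Rightarrow> 'a::comm_ring_1" where
  "ksign S j = (- 1) ^ card {k\<in>S. k < j}"

definition koszul_K :: "nat \<Rightarrow> nat \<Rightarrow> (nat set \<Rightarrow> 'a::comm_ring_1) set" where
  "koszul_K n i = {f. \<forall>S. f S \<noteq> 0 \<longrightarrow> S \<subseteq> {..<n} \<and> card S = i}"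

text \<open>Koszul differential of a: e_S maps to sum over j in S of sign * a_j e_(S-{j}).\<close>
definition koszul_d :: "nat \<Rightarrow> (nat \<Rightarrow> 'a::comm_ring_1) \<Rightarrow> (nat set \<Rightarrow> 'a) \<Rightarrow> (nat set \<Rightarrow> 'a)" where
  "koszul_d n a f = (\<lambda>S. \<Sum>j\<in>{..<n} - S. ksign S j * a j * f (insert j S))"

definition koszul_Z :: "nat \<Rightarrow> (nat \<Rightarrow> 'a::comm_ring_1) \<Rightarrow> nat \<Rightarrow> (nat set \<Rightarrow> 'a) set" where
  "koszul_Z n a i = {f \<in> koszul_K n i. koszul_d n a f = (\<lambda>_. 0)}"

definition KT :: "nat \<Rightarrow> nat \<Rightarrow> (nat set \<Rightarrow> (nat \<Rightarrow> nat) \<Rightarrow> 'a::comm_ring_1) set" where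
  "KT n i = {f. finite {(S, \<alpha>). f S \<alpha> \<noteq> 0} \<and>
                (\<forall>S \<alpha>. f S \<alpha> \<noteq> 0 \<longrightarrow> S \<subseteq> {..<n} \<and> card S = i \<and> (\<forall>j\<ge>n. \<alpha> j = 0))}"

text \<open>Z_i tensor A[T] = direct sum over monomials T^alpha of Z_i T^alpha.\<close>
definition approx_Z :: "nat \<Rightarrow> (nat \<Rightarrow> 'a::comm_ring_1) \<Rightarrow> nat \<Rightarrow> (nat set \<Rightarrow> (nat \<Rightarrow> nat) \<Rightarrow> 'a) set" where
  "approx_Z n a i = {f \<in> KT n i. \<forall>\<alpha>. (\<lambda>S. f S \<alpha>) \<in> koszul_Z n a i}"

text \<open>Koszul differential of T: e_S T^beta maps to sum over j in S of sign * e_(S-{j}) T^(beta + delta_j).\<close>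
definition koszul_dT :: "nat \<Rightarrow> (nat set \<Rightarrow> (nat \<Rightarrow> nat) \<Rightarrow> 'a::comm_ring_1) \<Rightarrow> (nat set \<Rightarrow> (nat \<Rightarrow> nat) \<Rightarrow> 'a)" where
  "koszul_dT n f = (\<lambda>S \<alpha>. \<Sum>j\<in>{j\<in>{..<n} - S. 1 \<le> \<alpha> j}. ksign S j * f (insert j S) (\<alpha>(j := \<alpha> j - 1)))"

definition approx_H_zero :: "nat \<Rightarrow> (nat \<Rightarrow> 'a::comm_ring_1) \<Rightarrow> nat \<Rightarrow> bool" where
  "approx_H_zero n a i \<longleftrightarrow>
     (\<forall>f\<in>approx_Z n a i. koszul_dT n f = (\<lambda>_ _. 0) \<longrightarrow> (\<exists>g\<in>approx_Z n a (Suc i). koszul_dT n g = f))"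

end

theory Submission
  imports Defs
begin

text \<open>
  Only the radical condition and the grade enter the proof.

  Two facts combine. First, \<open>H\<^sub>j(a; A) = 0\<close> for \<open>j > n - \<sigma>\<close>: the ideal \<open>(a)\<close> annihilates
  Koszul homology, and along an \<open>\<mm>\<close>-regular sequence, whose members have powers in \<open>(a)\<close>, this
  propagates to vanishing, working modulo the ideal generated by the first members of the sequence.
  Second, \<open>H\<^sub>i(\<Z>\<^sub>\<bullet>) = 0\<close> as soon as \<open>i \<ge> 1\<close> and \<open>H\<^sub>i\<^sub>+\<^sub>1(a; A) = 0\<close>: the differential \<open>d\<^sub>T\<close>
  on \<open>K\<^sub>\<bullet> \<otimes> A[T]\<close> is exact in positive degree (it has an explicit contracting homotopy) and
  anticommutes with \<open>d\<^sub>a\<close>, which allows a \<open>d\<^sub>T\<close>-cycle in \<open>\<Z>\<^sub>i\<close> to be lifted to \<open>\<Z>\<^sub>i\<^sub>+\<^sub>1\<close> by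
  induction on the \<open>T\<close>-degree.
\<close>

lemma is_ideal_ideal_gen: "is_ideal (ideal_gen F)"
  unfolding is_ideal_def ideal_gen_def by auto

lemma ideal_gen_superset: "F \<subseteq> ideal_gen F"
  unfolding ideal_gen_def by auto

lemma ideal_gen_least: "is_ideal J \<Longrightarrow> F \<subseteq> J \<Longrightarrow> ideal_gen F \<subseteq> J"
  unfolding ideal_gen_def by auto

lemma ideal_gen_mono: "F \<subseteq> F' \<Longrightarrow> ideal_gen F \<subseteq> ideal_gen F'"
  by (meson ideal_gen_least ideal_gen_superset is_ideal_ideal_gen order_trans)

lemma ideal_zero: "is_ideal J \<Longrightarrow> 0 \<in> J"
  unfolding is_ideal_def by auto

lemma ideal_add: "is_ideal J \<Longrightarrow> x \<in> J \<Longrightarrow> y \<in> J \<Longrightarrow> x + y \<in> J"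
  unfolding is_ideal_def by auto

lemma ideal_mult_left: "is_ideal J \<Longrightarrow> x \<in> J \<Longrightarrow> r * x \<in> J"
  unfolding is_ideal_def by auto

lemma ideal_mult_right: "is_ideal J \<Longrightarrow> x \<in> J \<Longrightarrow> x * r \<in> J"
  using ideal_mult_left[of J x r] by (simp add: mult.commute)

lemma ideal_diff: "is_ideal J \<Longrightarrow> x \<in> J \<Longrightarrow> y \<in> J \<Longrightarrow> x - y \<in> J"
  using ideal_add[of J x "-y"] ideal_mult_left[of J y "-1"] by simp

lemma ideal_sum: "is_ideal J \<Longrightarrow> (\<And>x. x \<in> A \<Longrightarrow> g x \<in> J) \<Longrightarrow> sum g A \<in> J"
  by (induction A rule: infinite_finite_induct) (simp_all add: ideal_zero ideal_add)

lemmas ideal_gen_zero = ideal_zero[OF is_ideal_ideal_gen]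
  and ideal_gen_add = ideal_add[OF is_ideal_ideal_gen]
  and ideal_gen_mult_left = ideal_mult_left[OF is_ideal_ideal_gen]
  and ideal_gen_mult_right = ideal_mult_right[OF is_ideal_ideal_gen]
  and ideal_gen_diff = ideal_diff[OF is_ideal_ideal_gen]

lemma ideal_gen_empty: "ideal_gen ({}::'a::comm_ring_1 set) = {0}"
proof
  have "is_ideal ({0}::'a set)"
    unfolding is_ideal_def by auto
  then show "ideal_gen ({}::'a set) \<subseteq> {0}"
    by (rule ideal_gen_least) auto
qed (simp add: ideal_gen_zero)

lemma ideal_gen_insert_subset:
  fixes x :: "'a::comm_ring_1"
  shows "ideal_gen (insert x F) \<subseteq> {c + r * x | c r. c \<in> ideal_gen F}"
proof (rule ideal_gen_least)
  show "is_ideal {c + r * x | c r. c \<in> ideal_gen F}"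
    unfolding is_ideal_def
  proof (intro conjI ballI allI)
    show "0 \<in> {c + r * x | c r. c \<in> ideal_gen F}"
      using ideal_gen_zero by (intro CollectI exI[of _ 0]) auto
  next
    fix u v assume "u \<in> {c + r * x | c r. c \<in> ideal_gen F}" "v \<in> {c + r * x | c r. c \<in> ideal_gen F}"
    then obtain c1 r1 c2 r2
      where "u = c1 + r1 * x" "c1 \<in> ideal_gen F" "v = c2 + r2 * x" "c2 \<in> ideal_gen F"
      by auto
    then show "u + v \<in> {c + r * x | c r. c \<in> ideal_gen F}"
      by (intro CollectI exI[of _ "c1 + c2"] exI[of _ "r1 + r2"])
        (auto simp: ideal_gen_add algebra_simps)
  next
    fix s u assume "u \<in> {c + r * x | c r. c \<in> ideal_gen F}"
    then obtain c1 r1 where "u = c1 + r1 * x" "c1 \<in> ideal_gen F"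
      by auto
    then have "s * u = s * c1 + (s * r1) * x" "s * c1 \<in> ideal_gen F"
      by (simp_all add: ideal_gen_mult_left distrib_left)
    then show "s * u \<in> {c + r * x | c r. c \<in> ideal_gen F}"
      by blast
  qed
  have "x = 0 + 1 * x" "\<And>y. y = y + 0 * x"
    by simp_all
  then show "insert x F \<subseteq> {c + r * x | c r. c \<in> ideal_gen F}"
    using ideal_gen_zero ideal_gen_superset[of F] by blast
qed

section \<open>The Koszul complex\<close>

lemma ksign_insert:
  assumes "j \<notin> S"
  shows "ksign (insert j S) k = (if j < k then -1 else 1) * (ksign S k :: 'a::comm_ring_1)"
proof -
  have fin: "finite {x\<in>S. x < k}"
    by (rule finite_subset[of _ "{..<k}"]) auto
  show ?thesis
  proof (cases "j < k")
    case True
    then have "{x\<in>insert j S. x < k} = insert j {x\<in>S. x < k}" by auto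
    then show ?thesis using True assms fin by (simp add: ksign_def)
  next
    case False
    then have "{x\<in>insert j S. x < k} = {x\<in>S. x < k}" by auto
    then show ?thesis using False by (simp add: ksign_def)
  qed
qed

lemma ksign_remove:
  assumes "q \<in> S"
  shows "ksign S k = (if q < k then -1 else 1) * (ksign (S - {q}) k :: 'a::comm_ring_1)"
  using ksign_insert[of q "S - {q}" k] assms by (simp add: insert_absorb)

lemma ksign_square: "ksign S j * ksign S j = (1::'a::comm_ring_1)"
  unfolding ksign_def by (simp add: power_mult_distrib[symmetric])

lemma ksign_insert_swap:
  assumes "j \<notin> S" "k \<notin> S" "j \<noteq> k"
  shows "ksign S j * ksign (insert j S) k = - (ksign S k * ksign (insert k S) j :: 'a::comm_ring_1)"
  using assms by (cases "j < k") (simp_all add: ksign_insert)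

lemma sum_sum_antisym_eq_0:
  fixes \<phi> :: "nat \<Rightarrow> nat \<Rightarrow> 'a::comm_ring_1"
  assumes fin: "finite A"
    and anti: "\<And>j k. j \<in> A \<Longrightarrow> k \<in> A \<Longrightarrow> j \<noteq> k \<Longrightarrow> \<phi> k j = - \<phi> j k"
  shows "(\<Sum>j\<in>A. \<Sum>k\<in>A - {j}. \<phi> j k) = 0"
proof -
  have split: "(\<Sum>k\<in>A - {j}. \<phi> j k) = (\<Sum>k\<in>{k\<in>A. k < j}. \<phi> j k) + (\<Sum>k\<in>{k\<in>A. j < k}. \<phi> j k)"
    for j
  proof -
    have "A - {j} = {k\<in>A. k < j} \<union> {k\<in>A. j < k}" by auto
    then show ?thesis
      using fin by (simp add: sum.union_disjoint disjoint_iff)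
  qed
  have "(\<Sum>j\<in>A. \<Sum>k\<in>{k\<in>A. j < k}. \<phi> j k) = (\<Sum>k\<in>A. \<Sum>j\<in>{j\<in>A. j < k}. \<phi> j k)"
    using sum.swap_restrict[OF fin fin, of \<phi> "\<lambda>j k. j < k"] by simp
  also have "\<dots> = (\<Sum>k\<in>A. \<Sum>j\<in>{j\<in>A. j < k}. - \<phi> k j)"
    using anti by (intro sum.cong refl) (metis (mono_tags, lifting) mem_Collect_eq less_irrefl)
  also have "\<dots> = - (\<Sum>j\<in>A. \<Sum>k\<in>{k\<in>A. k < j}. \<phi> j k)"
    by (simp add: sum_negf)
  finally show ?thesis by (simp add: split sum.distrib)
qed

lemma koszul_d_add: "koszul_d n a (\<lambda>S. f S + g S) S = koszul_d n a f S + koszul_d n a g S"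
  by (simp add: koszul_d_def sum.distrib algebra_simps)

lemma koszul_d_smult: "koszul_d n a (\<lambda>S. r * f S) S = r * koszul_d n a f S"
  by (simp add: koszul_d_def sum_distrib_left algebra_simps)

lemma koszul_d_zero: "koszul_d n a (\<lambda>S. 0) S = 0"
  by (simp add: koszul_d_def)

lemma koszul_d_ideal: "(\<And>S. f S \<in> ideal_gen J) \<Longrightarrow> koszul_d n a f S \<in> ideal_gen J"
  unfolding koszul_d_def by (intro ideal_sum[OF is_ideal_ideal_gen] ideal_gen_mult_left)

lemma koszul_d_koszul_d: "koszul_d n a (koszul_d n a f) S = 0"
proof -
  let ?A = "{..<n} - S"
  define \<phi> where "\<phi> j k = (ksign S j * ksign (insert j S) k) * (a j * a k * f (insert k (insert j S)))"
    for j k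
  have "koszul_d n a (koszul_d n a f) S = (\<Sum>j\<in>?A. \<Sum>k\<in>?A - {j}. \<phi> j k)"
    unfolding koszul_d_def \<phi>_def sum_distrib_left
    by (intro sum.cong) (auto simp: algebra_simps)
  also have "\<dots> = 0"
  proof (rule sum_sum_antisym_eq_0)
    fix j k assume "j \<in> ?A" "k \<in> ?A" "j \<noteq> k"
    then have "ksign S k * ksign (insert k S) j = - (ksign S j * ksign (insert j S) k :: 'a)"
      by (intro ksign_insert_swap) auto
    moreover have "insert j (insert k S) = insert k (insert j S)"
      by auto
    ultimately show "\<phi> k j = - \<phi> j k"
      unfolding \<phi>_def by (simp add: algebra_simps)
  qed simp
  finally show ?thesis .
qed

lemma koszul_K_zero: "(\<lambda>S. 0) \<in> koszul_K n j"
  by (simp add: koszul_K_def)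

lemma koszul_K_add: "f \<in> koszul_K n j \<Longrightarrow> g \<in> koszul_K n j \<Longrightarrow> (\<lambda>S. f S + g S) \<in> koszul_K n j"
proof -
  assume "f \<in> koszul_K n j" "g \<in> koszul_K n j"
  moreover have "f S + g S \<noteq> 0 \<Longrightarrow> f S \<noteq> 0 \<or> g S \<noteq> 0" for S
    by auto
  ultimately show ?thesis
    unfolding koszul_K_def by blast
qed

lemma koszul_K_smult: "f \<in> koszul_K n j \<Longrightarrow> (\<lambda>S. r * f S) \<in> koszul_K n j"
proof -
  assume "f \<in> koszul_K n j"
  moreover have "r * f S \<noteq> 0 \<Longrightarrow> f S \<noteq> 0" for S
    by auto
  ultimately show ?thesis
    unfolding koszul_K_def by blast
qed

lemma card_insert_subset_lessThan:
  fixes n :: nat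
  assumes "insert j S \<subseteq> {..<n}" "j \<notin> S"
  shows "card (insert j S) = Suc (card S)"
proof -
  have "S \<subseteq> {..<n}"
    using assms(1) by simp
  then have "finite S"
    by (rule finite_subset) simp
  then show ?thesis
    using assms(2) by simp
qed

lemma koszul_d_K:
  assumes "f \<in> koszul_K n (Suc i)"
  shows "koszul_d n a f \<in> koszul_K n i"
proof -
  have "S \<subseteq> {..<n} \<and> card S = i" if "koszul_d n a f S \<noteq> 0" for S
  proof -
    obtain j where j: "j \<in> {..<n} - S" "ksign S j * a j * f (insert j S) \<noteq> 0"
      using \<open>koszul_d n a f S \<noteq> 0\<close> unfolding koszul_d_def
      by (rule sum.not_neutral_contains_not_neutral)
    then have "f (insert j S) \<noteq> 0"
      by auto
    then have "insert j S \<subseteq> {..<n}" "card (insert j S) = Suc i"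
      using assms by (auto simp: koszul_K_def)
    with j(1) show ?thesis
      using card_insert_subset_lessThan[of j S n] by auto
  qed
  then show ?thesis
    by (auto simp: koszul_K_def)
qed

definition koszul_wedge :: "nat \<Rightarrow> (nat set \<Rightarrow> 'a::comm_ring_1) \<Rightarrow> nat set \<Rightarrow> 'a" where
  "koszul_wedge k f = (\<lambda>T. if k \<in> T then ksign (T - {k}) k * f (T - {k}) else 0)"

lemma koszul_wedge_K:
  assumes "f \<in> koszul_K n i" "k < n"
  shows "koszul_wedge k f \<in> koszul_K n (Suc i)"
proof -
  have "T \<subseteq> {..<n} \<and> card T = Suc i" if "koszul_wedge k f T \<noteq> 0" for T
  proof -
    have "k \<in> T" "f (T - {k}) \<noteq> 0"
      using that by (auto simp: koszul_wedge_def split: if_splits)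
    then have "insert k (T - {k}) = T" "T - {k} \<subseteq> {..<n}" "card (T - {k}) = i"
      using assms(1) by (auto simp: koszul_K_def)
    then show ?thesis
      using assms(2) card_insert_subset_lessThan[of k "T - {k}" n] by auto
  qed
  then show ?thesis
    by (auto simp: koszul_K_def)
qed

lemma koszul_d_wedge_mem:
  assumes "k < n" and k_mem: "k \<in> S"
  shows "a k * f S = koszul_d n a (koszul_wedge k f) S + koszul_wedge k (koszul_d n a f) S"
proof -
  let ?A = "{..<n} - S" and ?S = "S - {k}"
  let ?s = "ksign ?S k :: 'a"
  let ?t = "\<lambda>j. ?s * ksign ?S j * a j * f (insert j ?S)"
  have "{..<n} - ?S = insert k ?A"
    using k_mem assms by auto
  then have "koszul_wedge k (koszul_d n a f) S = ?s * (\<Sum>j\<in>insert k ?A. ksign ?S j * a j * f (insert j ?S))"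
    using k_mem by (simp add: koszul_wedge_def koszul_d_def)
  also have "\<dots> = (?s * ?s) * (a k * f S) + (\<Sum>j\<in>?A. ?t j)"
    using k_mem by (simp add: sum_distrib_left insert_absorb algebra_simps)
  finally have wedge_d: "koszul_wedge k (koszul_d n a f) S = a k * f S + (\<Sum>j\<in>?A. ?t j)"
    by (simp add: ksign_square)
  have "koszul_d n a (koszul_wedge k f) S = (\<Sum>j\<in>?A. - ?t j)"
    unfolding koszul_d_def koszul_wedge_def
  proof (intro sum.cong refl)
    fix j assume "j \<in> ?A"
    then have j: "j \<noteq> k" "j \<notin> ?S"
      using k_mem by auto
    have sign: "ksign S j * ksign (insert j ?S) k = - (?s * ksign ?S j)"
      using k_mem j by (cases "j < k") (simp_all add: ksign_remove[OF k_mem, of j] ksign_insert)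
    have "insert j S - {k} = insert j ?S"
      using j by auto
    then have "ksign S j * a j * (if k \<in> insert j S
        then ksign (insert j S - {k}) k * f (insert j S - {k}) else 0)
      = (ksign S j * ksign (insert j ?S) k) * (a j * f (insert j ?S))"
      using k_mem by (simp add: ac_simps)
    also have "\<dots> = - ?t j"
      unfolding sign by (simp add: algebra_simps)
    finally show "ksign S j * a j * (if k \<in> insert j S
        then ksign (insert j S - {k}) k * f (insert j S - {k}) else 0) = - ?t j" .
  qed
  then show ?thesis
    using wedge_d by (simp add: sum_negf)
qed

lemma koszul_d_wedge_not_mem:
  assumes "k < n" and k_not_mem: "k \<notin> S"
  shows "a k * f S = koszul_d n a (koszul_wedge k f) S + koszul_wedge k (koszul_d n a f) S"
proof -
  have "koszul_d n a (koszul_wedge k f) S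
      = (\<Sum>j\<in>{..<n} - S. if j = k then ksign S k * a k * (ksign S k * f S) else 0)"
    unfolding koszul_d_def koszul_wedge_def
    by (intro sum.cong refl) (use k_not_mem in auto)
  also have "\<dots> = (ksign S k * ksign S k) * (a k * f S)"
    using k_not_mem assms by (simp add: sum.delta algebra_simps)
  finally show ?thesis
    using k_not_mem by (simp add: ksign_square koszul_wedge_def)
qed

lemma koszul_d_wedge:
  "k < n \<Longrightarrow> a k * f S = koszul_d n a (koszul_wedge k f) S + koszul_wedge k (koszul_d n a f) S"
  using koszul_d_wedge_mem koszul_d_wedge_not_mem by blast

section \<open>Koszul homology modulo an ideal\<close>

text \<open>Cycles and boundaries of \<open>K\<^sub>\<bullet>(a; A/(J))\<close>, represented by lifts to \<open>K\<^sub>\<bullet>(a; A)\<close>.\<close>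
definition koszul_cycle_mod :: "nat \<Rightarrow> (nat \<Rightarrow> 'a::comm_ring_1) \<Rightarrow> 'a set \<Rightarrow> nat \<Rightarrow> (nat set \<Rightarrow> 'a) \<Rightarrow> bool"
  where "koszul_cycle_mod n a J j f \<longleftrightarrow> f \<in> koszul_K n j \<and> (\<forall>S. koszul_d n a f S \<in> ideal_gen J)"

definition koszul_boundary_mod :: "nat \<Rightarrow> (nat \<Rightarrow> 'a::comm_ring_1) \<Rightarrow> 'a set \<Rightarrow> nat \<Rightarrow> (nat set \<Rightarrow> 'a) \<Rightarrow> bool"
  where "koszul_boundary_mod n a J j f \<longleftrightarrow>
    (\<exists>h\<in>koszul_K n (Suc j). \<forall>S. f S - koszul_d n a h S \<in> ideal_gen J)"

definition regular_seq_mod :: "'a::comm_ring_1 set \<Rightarrow> 'a list \<Rightarrow> bool" where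
  "regular_seq_mod J xs \<longleftrightarrow> (\<forall>i<length xs. \<forall>y.
     xs ! i * y \<in> ideal_gen (J \<union> set (take i xs)) \<longrightarrow> y \<in> ideal_gen (J \<union> set (take i xs)))"

lemma regular_seq_mod_Cons:
  "regular_seq_mod J (x # xs) \<longleftrightarrow>
     (\<forall>y. x * y \<in> ideal_gen J \<longrightarrow> y \<in> ideal_gen J) \<and> regular_seq_mod (insert x J) xs"
proof -
  have "J \<union> set (take (Suc i) (x # xs)) = insert x J \<union> set (take i xs)" for i
    by auto
  then show ?thesis
    unfolding regular_seq_mod_def by (auto simp: All_less_Suc2 nth_Cons_Suc)
qed

lemma koszul_cycle_mod_smult:
  "koszul_cycle_mod n a J j f \<Longrightarrow> koszul_cycle_mod n a J j (\<lambda>S. r * f S)"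
  unfolding koszul_cycle_mod_def koszul_d_smult by (simp add: koszul_K_smult ideal_gen_mult_left)

lemma koszul_boundary_mod_zero: "koszul_boundary_mod n a J j (\<lambda>S. 0)"
  unfolding koszul_boundary_mod_def
  by (intro bexI[OF _ koszul_K_zero]) (simp add: koszul_d_zero ideal_gen_zero)

lemma koszul_boundary_mod_add:
  assumes "koszul_boundary_mod n a J j f" "koszul_boundary_mod n a J j g"
  shows "koszul_boundary_mod n a J j (\<lambda>S. f S + g S)"
proof -
  obtain h1 h2 where h: "h1 \<in> koszul_K n (Suc j)" "\<forall>S. f S - koszul_d n a h1 S \<in> ideal_gen J"
    "h2 \<in> koszul_K n (Suc j)" "\<forall>S. g S - koszul_d n a h2 S \<in> ideal_gen J"
    using assms unfolding koszul_boundary_mod_def by blast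
  have eq: "f S + g S - koszul_d n a (\<lambda>S. h1 S + h2 S) S
      = (f S - koszul_d n a h1 S) + (g S - koszul_d n a h2 S)" for S
    by (simp add: koszul_d_add algebra_simps)
  show ?thesis
    unfolding koszul_boundary_mod_def
  proof (intro bexI[of _ "\<lambda>S. h1 S + h2 S"] allI)
    show "f S + g S - koszul_d n a (\<lambda>S. h1 S + h2 S) S \<in> ideal_gen J" for S
      unfolding eq using h by (simp add: ideal_gen_add)
  qed (use h in \<open>simp add: koszul_K_add\<close>)
qed

lemma koszul_boundary_mod_smult:
  assumes "koszul_boundary_mod n a J j f"
  shows "koszul_boundary_mod n a J j (\<lambda>S. r * f S)"
proof -
  obtain h where h: "h \<in> koszul_K n (Suc j)" "\<forall>S. f S - koszul_d n a h S \<in> ideal_gen J"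
    using assms unfolding koszul_boundary_mod_def by blast
  have eq: "r * f S - koszul_d n a (\<lambda>S. r * h S) S = r * (f S - koszul_d n a h S)" for S
    by (simp add: koszul_d_smult algebra_simps)
  show ?thesis
    unfolding koszul_boundary_mod_def
  proof (intro bexI[of _ "\<lambda>S. r * h S"] allI)
    show "r * f S - koszul_d n a (\<lambda>S. r * h S) S \<in> ideal_gen J" for S
      unfolding eq using h by (simp add: ideal_gen_mult_left)
  qed (use h in \<open>simp add: koszul_K_smult\<close>)
qed

text \<open>Each \<open>a\<^sub>k\<close> is null-homotopic on \<open>K\<^sub>\<bullet>\<close>, by \<open>koszul_d_wedge\<close>.\<close>
lemma koszul_homology_mod_annihilated:
  assumes cycle: "koszul_cycle_mod n a J j f" and r: "r \<in> ideal_gen (a ` {..<n})"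
  shows "koszul_boundary_mod n a J j (\<lambda>S. r * f S)"
proof -
  let ?B = "{r. koszul_boundary_mod n a J j (\<lambda>S. r * f S)}"
  have "is_ideal ?B"
    unfolding is_ideal_def
    using koszul_boundary_mod_zero koszul_boundary_mod_add[of n a J j "\<lambda>S. _ * f S" "\<lambda>S. _ * f S"]
      koszul_boundary_mod_smult[of n a J j "\<lambda>S. _ * f S"]
    by (simp add: distrib_right mult.assoc)
  moreover have "a k \<in> ?B" if "k < n" for k
  proof -
    have "a k * f S - koszul_d n a (koszul_wedge k f) S = koszul_wedge k (koszul_d n a f) S" for S
      using koszul_d_wedge[OF that, of a f S] by (simp add: algebra_simps)
    moreover have "koszul_wedge k (koszul_d n a f) S \<in> ideal_gen J" for S
      using cycle unfolding koszul_cycle_mod_def koszul_wedge_def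
      by (simp add: ideal_gen_mult_left ideal_gen_zero)
    ultimately show ?thesis
      using cycle that koszul_wedge_K unfolding koszul_cycle_mod_def koszul_boundary_mod_def
      by (intro CollectI bexI[of _ "koszul_wedge k f"]) auto
  qed
  ultimately have "ideal_gen (a ` {..<n}) \<subseteq> ?B"
    by (intro ideal_gen_least) auto
  then show ?thesis
    using r by auto
qed

lemma koszul_K_mod_insert_decompose:
  assumes "g \<in> koszul_K n j" "\<And>S. g S \<in> ideal_gen (insert x J)"
  shows "\<exists>u\<in>koszul_K n j. \<forall>S. g S - x * u S \<in> ideal_gen J"
proof -
  have "\<exists>r. g S - x * r \<in> ideal_gen J" for S
  proof -
    obtain c r where "g S = c + r * x" "c \<in> ideal_gen J"
      using subsetD[OF ideal_gen_insert_subset assms(2)[of S]] by blast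
    then have "g S - x * r \<in> ideal_gen J"
      by (simp add: mult.commute)
    then show ?thesis ..
  qed
  then obtain r where r: "\<And>S. g S - x * r S \<in> ideal_gen J"
    by metis
  define u where "u S = (if g S = 0 then 0 else r S)" for S
  have "g S - x * u S \<in> ideal_gen J" for S
    using r[of S] by (simp add: u_def ideal_gen_zero)
  moreover have "u \<in> koszul_K n j"
    using assms(1) by (simp add: u_def koszul_K_def)
  ultimately show ?thesis
    by blast
qed

lemma koszul_boundary_mod_cancel_regular:
  assumes cycle: "koszul_cycle_mod n a J j y"
    and vanish: "\<And>g. koszul_cycle_mod n a (insert x J) (Suc j) g \<Longrightarrow>
                     koszul_boundary_mod n a (insert x J) (Suc j) g"
    and regular: "\<And>z. x * z \<in> ideal_gen J \<Longrightarrow> z \<in> ideal_gen J"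
    and boundary: "koszul_boundary_mod n a J j (\<lambda>S. x * y S)"
  shows "koszul_boundary_mod n a J j y"
proof -
  have J_sub: "ideal_gen J \<subseteq> ideal_gen (insert x J)"
    by (rule ideal_gen_mono) auto
  have x_mem: "x \<in> ideal_gen (insert x J)"
    using ideal_gen_superset by blast
  obtain h where h: "h \<in> koszul_K n (Suc j)" "\<And>S. x * y S - koszul_d n a h S \<in> ideal_gen J"
    using boundary unfolding koszul_boundary_mod_def by blast
  have "koszul_d n a h S \<in> ideal_gen (insert x J)" for S
    using ideal_gen_diff[OF ideal_gen_mult_right[OF x_mem, of "y S"] subsetD[OF J_sub h(2)[of S]]] by simp
  then have "koszul_cycle_mod n a (insert x J) (Suc j) h"
    using h(1) unfolding koszul_cycle_mod_def by blast
  then obtain h' where h': "h' \<in> koszul_K n (Suc (Suc j))"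
    "\<And>S. h S - koszul_d n a h' S \<in> ideal_gen (insert x J)"
    using vanish unfolding koszul_boundary_mod_def by blast
  have "(\<lambda>S. h S - koszul_d n a h' S) \<in> koszul_K n (Suc j)"
    using koszul_K_add[OF h(1) koszul_K_smult[OF koszul_d_K[OF h'(1)], of "-1"]] by simp
  then have "\<exists>u\<in>koszul_K n (Suc j). \<forall>S. h S - koszul_d n a h' S - x * u S \<in> ideal_gen J"
    using h'(2) by (rule koszul_K_mod_insert_decompose)
  then obtain u where u: "u \<in> koszul_K n (Suc j)"
    and rest: "\<And>S. h S - koszul_d n a h' S - x * u S \<in> ideal_gen J"
    by blast
  define c where "c S = h S - koszul_d n a h' S - x * u S" for S
  have "h = (\<lambda>S. koszul_d n a h' S + x * u S + c S)"
    by (simp add: c_def)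
  then have dh: "koszul_d n a h S = x * koszul_d n a u S + koszul_d n a c S" for S
    by (simp add: koszul_d_add koszul_d_smult koszul_d_koszul_d)
  show ?thesis
    unfolding koszul_boundary_mod_def
  proof (intro bexI[OF _ u] allI)
    fix S
    have "x * (y S - koszul_d n a u S) = (x * y S - koszul_d n a h S) + koszul_d n a c S"
      by (simp add: dh algebra_simps)
    then have "x * (y S - koszul_d n a u S) \<in> ideal_gen J"
      using h(2) rest by (simp add: ideal_gen_add koszul_d_ideal c_def)
    then show "y S - koszul_d n a u S \<in> ideal_gen J"
      by (rule regular)
  qed
qed

lemma koszul_boundary_mod_cancel_power:
  assumes "koszul_cycle_mod n a J j y"
    and cancel: "\<And>y. koszul_cycle_mod n a J j y \<Longrightarrow> koszul_boundary_mod n a J j (\<lambda>S. x * y S) \<Longrightarrow>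
                     koszul_boundary_mod n a J j y"
    and "koszul_boundary_mod n a J j (\<lambda>S. x ^ N * y S)"
  shows "koszul_boundary_mod n a J j y"
  using assms(1,3)
proof (induction N arbitrary: y)
  case (Suc N)
  have "koszul_boundary_mod n a J j (\<lambda>S. x ^ N * (x * y S))"
    using Suc.prems(2) by (simp add: ac_simps)
  then show ?case
    using Suc.IH[OF koszul_cycle_mod_smult[OF Suc.prems(1)]] cancel[OF Suc.prems(1)] by blast
qed simp

text \<open>Induction along the sequence, passing from \<open>J\<close> to \<open>(J, x)\<close>: a power of \<open>x\<close> lies in \<open>(a)\<close>
  and so kills the homology, while \<open>x\<close> itself acts injectively on it.\<close>
lemma koszul_boundary_mod_if_regular_seq:
  assumes "regular_seq_mod J xs" "set xs \<subseteq> radical (ideal_gen (a ` {..<n}))" "n < j + length xs"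
    and "koszul_cycle_mod n a J j f"
  shows "koszul_boundary_mod n a J j f"
  using assms
proof (induction xs arbitrary: J j f)
  case Nil
  have "f S = 0" for S
  proof (rule ccontr)
    assume "f S \<noteq> 0"
    then have "S \<subseteq> {..<n}" "card S = j"
      using Nil.prems(4) unfolding koszul_cycle_mod_def koszul_K_def by auto
    then show False
      using Nil.prems(3) card_mono[of "{..<n}" S] by auto
  qed
  then have "f = (\<lambda>S. 0)"
    by blast
  then show ?case
    by (simp add: koszul_boundary_mod_zero)
next
  case (Cons x xs)
  have regular: "\<And>z. x * z \<in> ideal_gen J \<Longrightarrow> z \<in> ideal_gen J"
    and vanish: "\<And>g. koszul_cycle_mod n a (insert x J) (Suc j) g \<Longrightarrow>
                     koszul_boundary_mod n a (insert x J) (Suc j) g"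
    using Cons.prems Cons.IH[of "insert x J" "Suc j"] by (auto simp: regular_seq_mod_Cons)
  obtain N where "x ^ N \<in> ideal_gen (a ` {..<n})"
    using Cons.prems(2) by (auto simp: radical_def)
  then show ?case
    using koszul_boundary_mod_cancel_power[OF Cons.prems(4)]
      koszul_boundary_mod_cancel_regular[OF _ vanish regular]
      koszul_homology_mod_annihilated[OF Cons.prems(4)]
    by blast
qed

definition koszul_H_zero :: "nat \<Rightarrow> (nat \<Rightarrow> 'a::comm_ring_1) \<Rightarrow> nat \<Rightarrow> bool" where
  "koszul_H_zero n a j \<longleftrightarrow> (\<forall>f\<in>koszul_Z n a j. \<exists>h\<in>koszul_K n (Suc j). koszul_d n a h = f)"

lemma koszul_H_zero_if_regular_seq:
  assumes "regular_seq_mod {} xs" "set xs \<subseteq> radical (ideal_gen (a ` {..<n}))" "n < j + length xs"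
  shows "koszul_H_zero n a j"
  unfolding koszul_H_zero_def
proof
  fix f assume "f \<in> koszul_Z n a j"
  then have "koszul_cycle_mod n a {} j f"
    by (simp add: koszul_Z_def koszul_cycle_mod_def ideal_gen_empty)
  then obtain h where "h \<in> koszul_K n (Suc j)" "\<forall>S. f S - koszul_d n a h S = 0"
    using koszul_boundary_mod_if_regular_seq[OF assms]
    by (auto simp: koszul_boundary_mod_def ideal_gen_empty)
  then show "\<exists>h\<in>koszul_K n (Suc j). koszul_d n a h = f"
    by (auto simp: fun_eq_iff)
qed

section \<open>The operators on \<open>K\<^sub>\<bullet> \<otimes> A[T]\<close>\<close>

definition koszul_d_tensor ::
    "nat \<Rightarrow> (nat \<Rightarrow> 'a::comm_ring_1) \<Rightarrow> (nat set \<Rightarrow> (nat \<Rightarrow> nat) \<Rightarrow> 'a) \<Rightarrow> nat set \<Rightarrow> (nat \<Rightarrow> nat) \<Rightarrow> 'a"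
  where "koszul_d_tensor n a F = (\<lambda>S \<alpha>. koszul_d n a (\<lambda>T. F T \<alpha>) S)"

lemma koszul_d_tensor_add:
  "koszul_d_tensor n a (\<lambda>S \<alpha>. F S \<alpha> + G S \<alpha>) = (\<lambda>S \<alpha>. koszul_d_tensor n a F S \<alpha> + koszul_d_tensor n a G S \<alpha>)"
  by (simp add: koszul_d_tensor_def koszul_d_add)

lemma koszul_d_tensor_twice: "koszul_d_tensor n a (koszul_d_tensor n a F) = (\<lambda>S \<alpha>. 0)"
  by (simp add: koszul_d_tensor_def koszul_d_koszul_d)

lemma koszul_dT_add:
  "koszul_dT n (\<lambda>S \<alpha>. F S \<alpha> + G S \<alpha>) = (\<lambda>S \<alpha>. koszul_dT n F S \<alpha> + koszul_dT n G S \<alpha>)"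
  by (simp add: koszul_dT_def sum.distrib algebra_simps)

lemma koszul_dT_zero: "koszul_dT n (\<lambda>S \<alpha>. 0) = (\<lambda>S \<alpha>. (0::'a::comm_ring_1))"
  by (simp add: koszul_dT_def)

lemma koszul_dT_twice: "koszul_dT n (koszul_dT n F) = (\<lambda>S \<alpha>. (0::'a::comm_ring_1))"
proof (intro ext)
  fix S :: "nat set" and \<alpha> :: "nat \<Rightarrow> nat"
  let ?B = "{j\<in>{..<n} - S. 1 \<le> \<alpha> j}"
  define \<phi> where "\<phi> j k = (ksign S j * ksign (insert j S) k) *
    F (insert k (insert j S)) (\<alpha>(j := \<alpha> j - 1, k := \<alpha> k - 1))" for j k
  have "koszul_dT n (koszul_dT n F) S \<alpha> = (\<Sum>j\<in>?B. \<Sum>k\<in>?B - {j}. \<phi> j k)"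
    unfolding koszul_dT_def
  proof (intro sum.cong refl)
    fix j assume "j \<in> ?B"
    have "{k \<in> {..<n} - insert j S. 1 \<le> (\<alpha>(j := \<alpha> j - 1)) k} = ?B - {j}"
      by auto
    then show "ksign S j * (\<Sum>k\<in>{k \<in> {..<n} - insert j S. 1 \<le> (\<alpha>(j := \<alpha> j - 1)) k}.
        ksign (insert j S) k * F (insert k (insert j S)) ((\<alpha>(j := \<alpha> j - 1)) (k := (\<alpha>(j := \<alpha> j - 1)) k - 1)))
      = (\<Sum>k\<in>?B - {j}. \<phi> j k)"
      unfolding \<phi>_def sum_distrib_left by (intro sum.cong) (auto simp: mult.assoc)
  qed
  also have "\<dots> = 0"
  proof (rule sum_sum_antisym_eq_0)
    fix j k assume jk: "j \<in> ?B" "k \<in> ?B" "j \<noteq> k"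
    then have "ksign S k * ksign (insert k S) j = - (ksign S j * ksign (insert j S) k :: 'a)"
      by (intro ksign_insert_swap) auto
    moreover have "\<alpha>(k := \<alpha> k - 1, j := \<alpha> j - 1) = \<alpha>(j := \<alpha> j - 1, k := \<alpha> k - 1)"
      using jk(3) by (intro fun_upd_twist) simp
    ultimately show "\<phi> k j = - \<phi> j k"
      unfolding \<phi>_def by (simp add: insert_commute)
  qed simp
  finally show "koszul_dT n (koszul_dT n F) S \<alpha> = 0" .
qed

lemma koszul_d_tensor_dT:
  "koszul_d_tensor n a (koszul_dT n F) = (\<lambda>S \<alpha>. - koszul_dT n (koszul_d_tensor n a F) S \<alpha>)"
proof (intro ext)
  fix S :: "nat set" and \<alpha> :: "nat \<Rightarrow> nat"
  let ?A = "{..<n} - S" and ?B = "{j\<in>{..<n} - S. 1 \<le> \<alpha> j}"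
  define \<psi> where "\<psi> k j = (ksign S k * ksign (insert k S) j) *
    (a k * F (insert j (insert k S)) (\<alpha>(j := \<alpha> j - 1)))" for k j
  have "koszul_d_tensor n a (koszul_dT n F) S \<alpha> = (\<Sum>k\<in>?A. \<Sum>j\<in>{j. j \<in> ?B \<and> k \<noteq> j}. \<psi> k j)"
    unfolding koszul_d_tensor_def koszul_d_def koszul_dT_def
  proof (intro sum.cong refl)
    fix k assume "k \<in> ?A"
    have "{j \<in> {..<n} - insert k S. 1 \<le> \<alpha> j} = {j. j \<in> ?B \<and> k \<noteq> j}"
      by auto
    then show "ksign S k * a k * (\<Sum>j\<in>{j \<in> {..<n} - insert k S. 1 \<le> \<alpha> j}.
        ksign (insert k S) j * F (insert j (insert k S)) (\<alpha>(j := \<alpha> j - 1)))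
      = (\<Sum>j\<in>{j. j \<in> ?B \<and> k \<noteq> j}. \<psi> k j)"
      unfolding \<psi>_def sum_distrib_left by (intro sum.cong) (auto simp: ac_simps)
  qed
  also have "\<dots> = (\<Sum>j\<in>?B. \<Sum>k\<in>{k. k \<in> ?A \<and> k \<noteq> j}. \<psi> k j)"
    by (rule sum.swap_restrict) auto
  also have "\<dots> = - koszul_dT n (koszul_d_tensor n a F) S \<alpha>"
    unfolding koszul_d_tensor_def koszul_d_def koszul_dT_def sum_negf[symmetric]
  proof (intro sum.cong refl)
    fix j assume j: "j \<in> ?B"
    have "{k. k \<in> ?A \<and> k \<noteq> j} = {..<n} - insert j S"
      by auto
    moreover have "\<psi> k j = - (ksign S j * (ksign (insert j S) k * a k *
        F (insert k (insert j S)) (\<alpha>(j := \<alpha> j - 1))))" if "k \<in> {..<n} - insert j S" for k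
    proof -
      have "ksign S k * ksign (insert k S) j = - (ksign S j * ksign (insert j S) k :: 'a)"
        using j that by (intro ksign_insert_swap) auto
      then show ?thesis
        unfolding \<psi>_def by (simp add: insert_commute algebra_simps)
    qed
    ultimately show "(\<Sum>k\<in>{k. k \<in> ?A \<and> k \<noteq> j}. \<psi> k j) = - (ksign S j *
        (\<Sum>k\<in>{..<n} - insert j S. ksign (insert j S) k * a k * F (insert k (insert j S)) (\<alpha>(j := \<alpha> j - 1))))"
      by (simp add: sum_distrib_left sum_negf[symmetric])
  qed
  finally show "koszul_d_tensor n a (koszul_dT n F) S \<alpha> = - koszul_dT n (koszul_d_tensor n a F) S \<alpha>" .
qed

lemma KT_zero: "(\<lambda>S \<alpha>. 0) \<in> KT n k"
  by (simp add: KT_def)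

lemma KT_add:
  assumes "F \<in> KT n k" "G \<in> KT n k"
  shows "(\<lambda>S \<alpha>. F S \<alpha> + G S \<alpha>) \<in> KT n k"
proof -
  have "{(S, \<alpha>). F S \<alpha> + G S \<alpha> \<noteq> 0} \<subseteq> {(S, \<alpha>). F S \<alpha> \<noteq> 0} \<union> {(S, \<alpha>). G S \<alpha> \<noteq> 0}"
    by auto
  moreover have "F S \<alpha> + G S \<alpha> \<noteq> 0 \<Longrightarrow> F S \<alpha> \<noteq> 0 \<or> G S \<alpha> \<noteq> 0" for S \<alpha>
    by auto
  ultimately show ?thesis
    using assms unfolding KT_def by (blast intro: finite_subset)
qed

lemma finite_support_from_image:
  fixes n :: nat
  assumes "finite {(T, \<beta>). F T \<beta> \<noteq> 0}"
    and "\<And>S \<alpha>. G S \<alpha> \<noteq> 0 \<Longrightarrow> \<exists>j<n. \<exists>T \<beta>. F T \<beta> \<noteq> 0 \<and> (S, \<alpha>) = g j (T, \<beta>)"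
  shows "finite {(S, \<alpha>). G S \<alpha> \<noteq> 0}"
proof (rule finite_subset)
  show "{(S, \<alpha>). G S \<alpha> \<noteq> 0} \<subseteq> (\<lambda>(j, p). g j p) ` ({..<n} \<times> {(T, \<beta>). F T \<beta> \<noteq> 0})"
    using assms(2) by fastforce
qed (use assms(1) in simp)

lemma koszul_dT_nonzero:
  assumes "koszul_dT n F S \<alpha> \<noteq> 0"
  shows "\<exists>j<n. j \<notin> S \<and> 1 \<le> \<alpha> j \<and> F (insert j S) (\<alpha>(j := \<alpha> j - 1)) \<noteq> 0"
proof -
  obtain j where "j \<in> {j\<in>{..<n} - S. 1 \<le> \<alpha> j}" "ksign S j * F (insert j S) (\<alpha>(j := \<alpha> j - 1)) \<noteq> 0"
    using assms unfolding koszul_dT_def by (rule sum.not_neutral_contains_not_neutral)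
  then show ?thesis
    by auto
qed

lemma koszul_d_tensor_nonzero:
  assumes "koszul_d_tensor n a F S \<alpha> \<noteq> 0"
  shows "\<exists>j<n. j \<notin> S \<and> F (insert j S) \<alpha> \<noteq> 0"
proof -
  obtain j where "j \<in> {..<n} - S" "ksign S j * a j * F (insert j S) \<alpha> \<noteq> 0"
    using assms unfolding koszul_d_tensor_def koszul_d_def by (rule sum.not_neutral_contains_not_neutral)
  then show ?thesis
    by auto
qed

lemma koszul_dT_KT:
  assumes F: "F \<in> KT n (Suc k)"
  shows "koszul_dT n F \<in> KT n k"
proof -
  let ?g = "\<lambda>j (T, \<beta>). (T - {j}, \<beta>(j := Suc (\<beta> j)))"
  have "S \<subseteq> {..<n} \<and> card S = k \<and> (\<forall>l\<ge>n. \<alpha> l = 0) \<and>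
      (\<exists>j<n. \<exists>T \<beta>. F T \<beta> \<noteq> 0 \<and> (S, \<alpha>) = ?g j (T, \<beta>))"
    if nonzero: "koszul_dT n F S \<alpha> \<noteq> 0" for S \<alpha>
  proof -
    obtain j where j: "j < n" "j \<notin> S" "1 \<le> \<alpha> j" and nz: "F (insert j S) (\<alpha>(j := \<alpha> j - 1)) \<noteq> 0"
      using koszul_dT_nonzero[OF nonzero] by blast
    then have ins: "insert j S \<subseteq> {..<n}" "card (insert j S) = Suc k"
      and vanish: "\<forall>l\<ge>n. (\<alpha>(j := \<alpha> j - 1)) l = 0"
      using F unfolding KT_def by blast+
    have "\<alpha> l = 0" if "n \<le> l" for l
      using vanish j(1) that by (metis fun_upd_other not_le)
    moreover have "card S = k"
      using card_insert_subset_lessThan[OF ins(1) j(2)] ins(2) by simp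
    moreover have "(S, \<alpha>) = ?g j (insert j S, \<alpha>(j := \<alpha> j - 1))"
      using j by auto
    ultimately show ?thesis
      using ins(1) j(1) nz by blast
  qed
  moreover have "finite {(S, \<alpha>). koszul_dT n F S \<alpha> \<noteq> 0}"
  proof (rule finite_support_from_image[of F _ n ?g])
    show "finite {(T, \<beta>). F T \<beta> \<noteq> 0}"
      using F unfolding KT_def by blast
  qed (use calculation in blast)
  ultimately show ?thesis
    unfolding KT_def by blast
qed

lemma koszul_d_tensor_KT:
  assumes F: "F \<in> KT n (Suc k)"
  shows "koszul_d_tensor n a F \<in> KT n k"
proof -
  let ?g = "\<lambda>j (T, \<beta>). (T - {j}, \<beta>)"
  have "S \<subseteq> {..<n} \<and> card S = k \<and> (\<forall>l\<ge>n. \<alpha> l = 0) \<and>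
      (\<exists>j<n. \<exists>T \<beta>. F T \<beta> \<noteq> 0 \<and> (S, \<alpha>) = ?g j (T, \<beta>))"
    if nonzero: "koszul_d_tensor n a F S \<alpha> \<noteq> 0" for S \<alpha>
  proof -
    obtain j where j: "j < n" "j \<notin> S" and nz: "F (insert j S) \<alpha> \<noteq> 0"
      using koszul_d_tensor_nonzero[OF nonzero] by blast
    then have ins: "insert j S \<subseteq> {..<n}" "card (insert j S) = Suc k" and "\<forall>l\<ge>n. \<alpha> l = 0"
      using F unfolding KT_def by blast+
    moreover have "card S = k"
      using card_insert_subset_lessThan[OF ins(1) j(2)] ins(2) by simp
    moreover have "(S, \<alpha>) = ?g j (insert j S, \<alpha>)"
      using j by auto
    ultimately show ?thesis
      using j(1) nz by blast
  qed
  moreover have "finite {(S, \<alpha>). koszul_d_tensor n a F S \<alpha> \<noteq> 0}"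
  proof (rule finite_support_from_image[of F _ n ?g])
    show "finite {(T, \<beta>). F T \<beta> \<noteq> 0}"
      using F unfolding KT_def by blast
  qed (use calculation in blast)
  ultimately show ?thesis
    unfolding KT_def by blast
qed

lemma approx_Z_iff: "f \<in> approx_Z n a i \<longleftrightarrow> f \<in> KT n i \<and> koszul_d_tensor n a f = (\<lambda>S \<alpha>. 0)"
proof -
  have "f \<in> KT n i \<Longrightarrow> (\<lambda>S. f S \<alpha>) \<in> koszul_K n i" for \<alpha>
    unfolding KT_def koszul_K_def by auto
  then show ?thesis
    unfolding approx_Z_def koszul_Z_def koszul_d_tensor_def by (auto simp: fun_eq_iff)
qed

section \<open>Exactness of \<open>d\<^sub>T\<close> in positive degree\<close>

definition homotopy_pivot :: "nat \<Rightarrow> nat set \<Rightarrow> (nat \<Rightarrow> nat) \<Rightarrow> nat" where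
  "homotopy_pivot n S \<beta> = Min (S \<union> {j. j < n \<and> 1 \<le> \<beta> j})"

text \<open>The contracting homotopy of the Koszul complex of \<open>T\<^sub>0, \<dots>, T\<^sub>n\<^sub>-\<^sub>1\<close> over \<open>A[T]\<close>, in
  coefficient form: \<open>e\<^sub>S T\<^sup>\<alpha>\<close> goes to \<open>e\<^sub>p \<and> e\<^sub>S T\<^sup>\<alpha>/T\<^sub>p\<close> when the least index \<open>p\<close> of
  \<open>S \<union> supp \<alpha>\<close> lies in \<open>supp \<alpha> - S\<close>, and to \<open>0\<close> otherwise.\<close>
definition koszul_dT_homotopy ::
    "nat \<Rightarrow> (nat set \<Rightarrow> (nat \<Rightarrow> nat) \<Rightarrow> 'a::comm_ring_1) \<Rightarrow> nat set \<Rightarrow> (nat \<Rightarrow> nat) \<Rightarrow> 'a"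
  where "koszul_dT_homotopy n f S \<beta> = (let p = homotopy_pivot n S \<beta> in
     if finite S \<and> p \<in> S then ksign (S - {p}) p * f (S - {p}) (\<beta>(p := Suc (\<beta> p))) else 0)"

lemma homotopy_pivot_mem:
  assumes "finite S" "x \<in> S \<or> (x < n \<and> 1 \<le> \<beta> x)"
  shows "homotopy_pivot n S \<beta> \<in> S \<or> (homotopy_pivot n S \<beta> < n \<and> 1 \<le> \<beta> (homotopy_pivot n S \<beta>))"
proof -
  have "finite (S \<union> {j. j < n \<and> 1 \<le> \<beta> j})"
    using assms(1) by simp
  then have "homotopy_pivot n S \<beta> \<in> S \<union> {j. j < n \<and> 1 \<le> \<beta> j}"
    unfolding homotopy_pivot_def using assms(2) by (intro Min_in) auto
  then show ?thesis
    by auto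
qed

lemma homotopy_pivot_le:
  assumes "finite S" "x \<in> S \<or> (x < n \<and> 1 \<le> \<beta> x)"
  shows "homotopy_pivot n S \<beta> \<le> x"
  unfolding homotopy_pivot_def using assms by (intro Min_le) auto

lemma homotopy_pivot_insert:
  assumes "j < n" "j \<notin> S" "1 \<le> \<alpha> j"
  shows "homotopy_pivot n (insert j S) (\<alpha>(j := \<alpha> j - 1)) = homotopy_pivot n S \<alpha>"
proof -
  have "insert j S \<union> {l. l < n \<and> 1 \<le> (\<alpha>(j := \<alpha> j - 1)) l} = S \<union> {l. l < n \<and> 1 \<le> \<alpha> l}"
    using assms by auto
  then show ?thesis
    by (simp add: homotopy_pivot_def)
qed

lemma koszul_dT_homotopy_insert:
  assumes "finite S" "j < n" "j \<notin> S" "1 \<le> \<alpha> j" "homotopy_pivot n S \<alpha> = q"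
  shows "koszul_dT_homotopy n f (insert j S) (\<alpha>(j := \<alpha> j - 1)) =
    (if q \<in> insert j S
     then ksign (insert j S - {q}) q * f (insert j S - {q}) (\<alpha>(j := \<alpha> j - 1, q := Suc ((\<alpha>(j := \<alpha> j - 1)) q)))
     else 0)"
  unfolding koszul_dT_homotopy_def homotopy_pivot_insert[of j n S \<alpha>, OF assms(2-4)] Let_def using assms by simp

lemma koszul_dT_homotopy_pivot_notin:
  assumes "finite S" and q: "homotopy_pivot n S \<alpha> = q" "q \<notin> S" "q < n" "1 \<le> \<alpha> q"
  shows "koszul_dT n (koszul_dT_homotopy n f) S \<alpha> = f S \<alpha>"
proof -
  let ?B = "{j\<in>{..<n} - S. 1 \<le> \<alpha> j}"
  have "koszul_dT n (koszul_dT_homotopy n f) S \<alpha>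
      = (\<Sum>j\<in>?B. if j = q then ksign S q * ksign S q * f S \<alpha> else 0)"
    unfolding koszul_dT_def
  proof (intro sum.cong refl)
    fix j assume j: "j \<in> ?B"
    have "insert q S - {q} = S" "\<alpha>(q := \<alpha> q - 1, q := Suc ((\<alpha>(q := \<alpha> q - 1)) q)) = \<alpha>"
      using q by auto
    then show "ksign S j * koszul_dT_homotopy n f (insert j S) (\<alpha>(j := \<alpha> j - 1))
        = (if j = q then ksign S q * ksign S q * f S \<alpha> else 0)"
      using koszul_dT_homotopy_insert[OF assms(1) _ _ _ q(1), of j f] j q(2)
      by (auto simp: mult.assoc)
  qed
  also have "\<dots> = f S \<alpha>"
    using q by (simp add: ksign_square)
  finally show ?thesis .
qed

lemma koszul_dT_at_remove:
  assumes "q \<in> S" "q < n"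
  shows "koszul_dT n f (S - {q}) (\<alpha>(q := Suc (\<alpha> q))) = ksign (S - {q}) q * f S \<alpha> +
    (\<Sum>j\<in>{j\<in>{..<n} - S. 1 \<le> \<alpha> j}. ksign (S - {q}) j * f (insert j (S - {q})) (\<alpha>(q := Suc (\<alpha> q), j := \<alpha> j - 1)))"
proof -
  let ?B = "{j\<in>{..<n} - S. 1 \<le> \<alpha> j}" and ?\<alpha> = "\<alpha>(q := Suc (\<alpha> q))"
  have q_notin: "q \<notin> ?B"
    using assms by auto
  have "{j\<in>{..<n} - (S - {q}). 1 \<le> ?\<alpha> j} = insert q ?B"
    using assms by auto
  moreover have "?\<alpha>(j := ?\<alpha> j - 1) = ?\<alpha>(j := \<alpha> j - 1)" if "j \<in> ?B" for j
    using that q_notin by auto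
  moreover have "insert q (S - {q}) = S" "?\<alpha>(q := ?\<alpha> q - 1) = \<alpha>"
    using assms by auto
  ultimately show ?thesis
    unfolding koszul_dT_def using q_notin by (simp add: sum.insert_remove)
qed

text \<open>When the pivot lies in \<open>S\<close>, the cycle condition at \<open>e\<^bsub>S-{q}\<^esub> T\<^sup>\<alpha> T\<^sub>q\<close> is exactly
  what is needed.\<close>
lemma koszul_dT_homotopy_pivot_in:
  assumes "finite S" and q: "homotopy_pivot n S \<alpha> = q" "q \<in> S" "q < n"
    and cycle: "koszul_dT n f (S - {q}) (\<alpha>(q := Suc (\<alpha> q))) = 0"
  shows "koszul_dT n (koszul_dT_homotopy n f) S \<alpha> = f S \<alpha>"
proof -
  let ?B = "{j\<in>{..<n} - S. 1 \<le> \<alpha> j}" and ?S = "S - {q}" and ?\<alpha> = "\<alpha>(q := Suc (\<alpha> q))"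
  let ?s = "ksign ?S q :: 'a"
  let ?t = "\<lambda>j. ksign ?S j * f (insert j ?S) (?\<alpha>(j := \<alpha> j - 1))"
  have sum_t: "(\<Sum>j\<in>?B. ?t j) = - (?s * f S \<alpha>)"
    using cycle koszul_dT_at_remove[OF q(2,3), of f \<alpha>] by (simp add: eq_neg_iff_add_eq_0 add.commute)
  have "koszul_dT n (koszul_dT_homotopy n f) S \<alpha> = (\<Sum>j\<in>?B. - ?s * ?t j)"
    unfolding koszul_dT_def
  proof (intro sum.cong refl)
    fix j assume j: "j \<in> ?B"
    then have "q \<le> j" "q \<noteq> j"
      using homotopy_pivot_le[OF assms(1), of j n \<alpha>] q by auto
    then have "q < j" "insert j S - {q} = insert j ?S" "j \<notin> ?S"
      "\<alpha>(j := \<alpha> j - 1, q := Suc ((\<alpha>(j := \<alpha> j - 1)) q)) = ?\<alpha>(j := \<alpha> j - 1)"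
      using j by (auto simp: fun_upd_twist)
    moreover have "ksign (insert j ?S) q = ?s"
      using \<open>q < j\<close> \<open>j \<notin> ?S\<close> by (simp add: ksign_insert)
    ultimately have homotopy: "koszul_dT_homotopy n f (insert j S) (\<alpha>(j := \<alpha> j - 1))
        = ?s * f (insert j ?S) (?\<alpha>(j := \<alpha> j - 1))"
      using koszul_dT_homotopy_insert[OF assms(1) _ _ _ q(1), of j f] j q(2) by simp
    have sign: "ksign S j = - ksign ?S j"
      using \<open>q < j\<close> q(2) by (simp add: ksign_remove[of q S j])
    show "ksign S j * koszul_dT_homotopy n f (insert j S) (\<alpha>(j := \<alpha> j - 1)) = - ?s * ?t j"
      unfolding homotopy sign by (simp add: algebra_simps)
  qed
  also have "\<dots> = - ?s * (\<Sum>j\<in>?B. ?t j)"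
    by (rule sum_distrib_left[symmetric])
  also have "\<dots> = (?s * ?s) * f S \<alpha>"
    unfolding sum_t by simp
  finally show ?thesis
    by (simp add: ksign_square)
qed

lemma koszul_dT_eq_0_if_no_support:
  assumes "{j\<in>{..<n} - S. 1 \<le> \<alpha> j} = {}"
  shows "koszul_dT n f S \<alpha> = 0"
  unfolding koszul_dT_def assms by simp

lemma koszul_dT_homotopy_eq_finite:
  assumes f: "f \<in> KT n i" and cycle: "koszul_dT n f = (\<lambda>S \<alpha>. 0)"
    and S: "finite S" "S \<noteq> {} \<or> (\<exists>j<n. j \<notin> S \<and> 1 \<le> \<alpha> j)"
  shows "koszul_dT n (koszul_dT_homotopy n f) S \<alpha> = f S \<alpha>"
proof -
  define q where "q = homotopy_pivot n S \<alpha>"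
  then have q: "q \<in> S \<or> (q < n \<and> 1 \<le> \<alpha> q)"
    using S homotopy_pivot_mem[OF S(1)] by blast
  consider "q \<notin> S" | "q \<in> S" "q < n" | "q \<in> S" "n \<le> q"
    by force
  then show ?thesis
  proof cases
    case 1
    then show ?thesis
      using q q_def koszul_dT_homotopy_pivot_notin[OF S(1)] by metis
  next
    case 2
    then show ?thesis
      using q_def cycle koszul_dT_homotopy_pivot_in[OF S(1)] by metis
  next
    case 3
    then have "{j\<in>{..<n} - S. 1 \<le> \<alpha> j} = {}"
      using homotopy_pivot_le[OF S(1), of _ n \<alpha>] q_def by force
    moreover have "f S \<alpha> = 0"
      using f 3 unfolding KT_def by force
    ultimately show ?thesis
      by (simp add: koszul_dT_eq_0_if_no_support)
  qed
qed

lemma koszul_dT_homotopy_eq: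
  assumes f: "f \<in> KT n i" "1 \<le> i" and cycle: "koszul_dT n f = (\<lambda>S \<alpha>. 0)"
  shows "koszul_dT n (koszul_dT_homotopy n f) = f"
proof (intro ext)
  fix S :: "nat set" and \<alpha> :: "nat \<Rightarrow> nat"
  have f_zero: "f S \<alpha> = 0" if "\<not> S \<subseteq> {..<n} \<or> S = {}"
    using f that unfolding KT_def by force
  show "koszul_dT n (koszul_dT_homotopy n f) S \<alpha> = f S \<alpha>"
  proof (cases "finite S")
    case False
    then have "koszul_dT_homotopy n f (insert j S) \<beta> = 0" for j \<beta>
      by (simp add: koszul_dT_homotopy_def)
    moreover have "\<not> S \<subseteq> {..<n}"
      using False finite_subset by blast
    ultimately show ?thesis
      using f_zero by (simp add: koszul_dT_def)
  next
    case True
    show ?thesis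
    proof (cases "S = {} \<and> \<not> (\<exists>j<n. j \<notin> S \<and> 1 \<le> \<alpha> j)")
      case empty: True
      then have "{j\<in>{..<n} - S. 1 \<le> \<alpha> j} = {}"
        by auto
      then show ?thesis
        using empty f_zero koszul_dT_eq_0_if_no_support by metis
    qed (use True koszul_dT_homotopy_eq_finite[OF f(1) cycle] in blast)
  qed
qed

lemma koszul_dT_homotopy_nonzero:
  assumes "koszul_dT_homotopy n f S \<beta> \<noteq> 0"
  shows "\<exists>p\<in>S. f (S - {p}) (\<beta>(p := Suc (\<beta> p))) \<noteq> 0"
  using assms unfolding koszul_dT_homotopy_def Let_def by (metis mult_zero_right)

lemma koszul_dT_homotopy_KT:
  assumes f: "f \<in> KT n i"
  shows "koszul_dT_homotopy n f \<in> KT n (Suc i)"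
    and "koszul_dT_homotopy n f S \<beta> \<noteq> 0 \<Longrightarrow> \<exists>p<n. f (S - {p}) (\<beta>(p := Suc (\<beta> p))) \<noteq> 0"
proof -
  let ?g = "\<lambda>p (T, \<gamma>). (insert p T, \<gamma>(p := \<gamma> p - 1))"
  have main: "S \<subseteq> {..<n} \<and> card S = Suc i \<and> (\<forall>l\<ge>n. \<beta> l = 0) \<and>
      (\<exists>p<n. f (S - {p}) (\<beta>(p := Suc (\<beta> p))) \<noteq> 0 \<and> (S, \<beta>) = ?g p (S - {p}, \<beta>(p := Suc (\<beta> p))))"
    if nonzero: "koszul_dT_homotopy n f S \<beta> \<noteq> 0" for S \<beta>
  proof -
    obtain p where p: "p \<in> S" and nz: "f (S - {p}) (\<beta>(p := Suc (\<beta> p))) \<noteq> 0"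
      using koszul_dT_homotopy_nonzero[OF nonzero] by blast
    then have sub: "S - {p} \<subseteq> {..<n}" and card: "card (S - {p}) = i"
      and vanish: "\<forall>l\<ge>n. (\<beta>(p := Suc (\<beta> p))) l = 0"
      using f unfolding KT_def by blast+
    have "p < n"
      using vanish by (metis fun_upd_same nat.distinct(1) not_le)
    moreover have "\<beta> l = 0" if "n \<le> l" for l
      using vanish that \<open>p < n\<close> by (metis fun_upd_other not_le)
    moreover have "S \<subseteq> {..<n}" "card S = Suc i"
      using card_insert_subset_lessThan[of p "S - {p}" n] sub card p \<open>p < n\<close> by (auto simp: insert_absorb)
    moreover have "(S, \<beta>) = ?g p (S - {p}, \<beta>(p := Suc (\<beta> p)))"
      using p by auto
    ultimately show ?thesis
      using nz by blast
  qed
  then show "koszul_dT_homotopy n f S \<beta> \<noteq> 0 \<Longrightarrow> \<exists>p<n. f (S - {p}) (\<beta>(p := Suc (\<beta> p))) \<noteq> 0"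
    by blast
  have "finite {(S, \<beta>). koszul_dT_homotopy n f S \<beta> \<noteq> 0}"
  proof (rule finite_support_from_image[of f _ n ?g])
    show "finite {(T, \<beta>). f T \<beta> \<noteq> 0}"
      using f unfolding KT_def by blast
  qed (use main in blast)
  then show "koszul_dT_homotopy n f \<in> KT n (Suc i)"
    using main unfolding KT_def by blast
qed

section \<open>Vanishing of the homology of the approximation complex\<close>

definition T_degree :: "nat \<Rightarrow> (nat \<Rightarrow> nat) \<Rightarrow> nat" where
  "T_degree n \<alpha> = (\<Sum>j<n. \<alpha> j)"

definition T_degree_below :: "nat \<Rightarrow> (nat set \<Rightarrow> (nat \<Rightarrow> nat) \<Rightarrow> 'a::zero) \<Rightarrow> nat \<Rightarrow> bool" where
  "T_degree_below n f m \<longleftrightarrow> (\<forall>S \<alpha>. f S \<alpha> \<noteq> 0 \<longrightarrow> T_degree n \<alpha> < m)"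

lemma T_degree_upd_Suc:
  assumes "p < n"
  shows "T_degree n (\<beta>(p := Suc (\<beta> p))) = Suc (T_degree n \<beta>)"
  using assms by (simp add: T_degree_def sum.remove[of "{..<n}" p])

lemma T_degree_below_0: "T_degree_below n f 0 \<longleftrightarrow> f = (\<lambda>S \<alpha>. 0)"
  by (auto simp: T_degree_below_def fun_eq_iff)

lemma KT_T_degree_below_ex:
  assumes "f \<in> KT n i"
  shows "\<exists>m. T_degree_below n f m"
proof -
  let ?supp = "{(S, \<alpha>). f S \<alpha> \<noteq> 0}"
  have "finite ?supp"
    using assms unfolding KT_def by blast
  then have "T_degree n \<alpha> < Suc (\<Sum>p\<in>?supp. T_degree n (snd p))" if "f S \<alpha> \<noteq> 0" for S \<alpha>
    using member_le_sum[of "(S, \<alpha>)" ?supp "\<lambda>p. T_degree n (snd p)"] that by simp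
  then show ?thesis
    unfolding T_degree_below_def by blast
qed

lemma T_degree_below_koszul_dT_homotopy:
  assumes "f \<in> KT n i" "T_degree_below n f (Suc m)"
  shows "T_degree_below n (koszul_dT_homotopy n f) m"
  unfolding T_degree_below_def
proof (intro allI impI)
  fix S \<beta> assume "koszul_dT_homotopy n f S \<beta> \<noteq> 0"
  then obtain p where "p < n" "f (S - {p}) (\<beta>(p := Suc (\<beta> p))) \<noteq> 0"
    using koszul_dT_homotopy_KT(2)[OF assms(1)] by blast
  then show "T_degree n \<beta> < m"
    using assms(2) T_degree_upd_Suc[of p n \<beta>] unfolding T_degree_below_def by fastforce
qed

lemma T_degree_below_koszul_d_tensor:
  "T_degree_below n F m \<Longrightarrow> T_degree_below n (koszul_d_tensor n a F) m"
  unfolding T_degree_below_def by (meson koszul_d_tensor_nonzero)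

lemma approx_Z_lift:
  assumes vanish: "koszul_H_zero n a j" and g: "g \<in> approx_Z n a j"
  shows "\<exists>G\<in>KT n (Suc j). koszul_d_tensor n a G = g"
proof -
  have "\<forall>\<alpha>. \<exists>h\<in>koszul_K n (Suc j). koszul_d n a h = (\<lambda>S. g S \<alpha>)"
    using vanish g unfolding koszul_H_zero_def approx_Z_def by blast
  then obtain H where H: "\<And>\<alpha>. H \<alpha> \<in> koszul_K n (Suc j)" "\<And>\<alpha>. koszul_d n a (H \<alpha>) = (\<lambda>S. g S \<alpha>)"
    by metis
  define G where "G S \<alpha> = (if \<exists>T. g T \<alpha> \<noteq> 0 then H \<alpha> S else 0)" for S \<alpha>
  have "koszul_d_tensor n a G = g"
  proof (intro ext)
    fix S \<alpha>
    show "koszul_d_tensor n a G S \<alpha> = g S \<alpha>"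
    proof (cases "\<exists>T. g T \<alpha> \<noteq> 0")
      case True
      then show ?thesis
        using H(2)[of \<alpha>] by (simp add: koszul_d_tensor_def G_def fun_eq_iff)
    next
      case False
      then show ?thesis
        by (simp add: koszul_d_tensor_def G_def koszul_d_zero)
    qed
  qed
  moreover have "G \<in> KT n (Suc j)"
  proof -
    have "{(S, \<alpha>). G S \<alpha> \<noteq> 0} \<subseteq> Pow {..<n} \<times> (snd ` {(T, \<alpha>). g T \<alpha> \<noteq> 0})"
      using H(1) by (force simp: G_def koszul_K_def split: if_splits)
    moreover have "finite (Pow {..<n} \<times> (snd ` {(T, \<alpha>). g T \<alpha> \<noteq> 0}))"
      using g unfolding approx_Z_def KT_def by auto
    moreover have "S \<subseteq> {..<n} \<and> card S = Suc j \<and> (\<forall>l\<ge>n. \<alpha> l = 0)" if "G S \<alpha> \<noteq> 0" for S \<alpha>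
      using that H(1)[of \<alpha>] g unfolding G_def koszul_K_def approx_Z_def KT_def
      by (auto split: if_splits)
    ultimately show ?thesis
      unfolding KT_def by (blast intro: finite_subset)
  qed
  ultimately show ?thesis
    by blast
qed

text \<open>Induction on the \<open>T\<close>-degree. \<open>F = koszul_dT_homotopy n f\<close> has \<open>d\<^sub>T F = f\<close> and lower degree,
  so \<open>d\<^sub>a F\<close> is a \<open>d\<^sub>T\<close>-cycle in \<open>\<Z>\<^sub>i\<close> of lower degree, hence \<open>d\<^sub>T g'\<close> with
  \<open>g' \<in> \<Z>\<^sub>i\<^sub>+\<^sub>1 = d\<^sub>a(K\<^sub>i\<^sub>+\<^sub>2 \<otimes> A[T])\<close>, say \<open>g' = d\<^sub>a G\<close>; then \<open>F + d\<^sub>T G\<close> lies in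
  \<open>\<Z>\<^sub>i\<^sub>+\<^sub>1\<close> and maps to \<open>f\<close>.\<close>
lemma approx_boundary_if_T_degree_below:
  assumes i: "1 \<le> i" and vanish: "koszul_H_zero n a (Suc i)"
  shows "f \<in> approx_Z n a i \<Longrightarrow> koszul_dT n f = (\<lambda>S \<alpha>. 0) \<Longrightarrow> T_degree_below n f m
    \<Longrightarrow> \<exists>g\<in>approx_Z n a (Suc i). koszul_dT n g = f"
proof (induction m arbitrary: f)
  case 0
  then show ?case
    by (intro bexI[of _ "\<lambda>S \<alpha>. 0"])
      (simp_all add: T_degree_below_0 koszul_dT_zero approx_Z_iff KT_zero koszul_d_tensor_def koszul_d_zero)
next
  case (Suc m)
  have f: "f \<in> KT n i" "koszul_d_tensor n a f = (\<lambda>S \<alpha>. 0)"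
    using Suc.prems(1) approx_Z_iff by blast+
  define F where "F = koszul_dT_homotopy n f"
  have F: "F \<in> KT n (Suc i)" "koszul_dT n F = f" "T_degree_below n F m"
    unfolding F_def using koszul_dT_homotopy_KT(1)[OF f(1)] koszul_dT_homotopy_eq[OF f(1) i Suc.prems(2)]
      T_degree_below_koszul_dT_homotopy[OF f(1) Suc.prems(3)] by blast+
  have "koszul_d_tensor n a F \<in> approx_Z n a i"
    unfolding approx_Z_iff using koszul_d_tensor_KT[OF F(1)] koszul_d_tensor_twice by blast
  moreover have "koszul_dT n (koszul_d_tensor n a F) = (\<lambda>S \<alpha>. 0)"
    using koszul_d_tensor_dT[of n a F] by (simp add: F(2) f(2) fun_eq_iff)
  moreover have "T_degree_below n (koszul_d_tensor n a F) m"
    using F(3) by (rule T_degree_below_koszul_d_tensor)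
  ultimately obtain g' where g': "g' \<in> approx_Z n a (Suc i)" "koszul_dT n g' = koszul_d_tensor n a F"
    using Suc.IH by blast
  obtain G where G: "G \<in> KT n (Suc (Suc i))" "koszul_d_tensor n a G = g'"
    using approx_Z_lift[OF vanish g'(1)] by blast
  define g where "g = (\<lambda>S \<alpha>. F S \<alpha> + koszul_dT n G S \<alpha>)"
  have "g \<in> KT n (Suc i)"
    unfolding g_def by (rule KT_add[OF F(1) koszul_dT_KT[OF G(1)]])
  moreover have "koszul_d_tensor n a g = (\<lambda>S \<alpha>. 0)"
    unfolding g_def koszul_d_tensor_add koszul_d_tensor_dT G(2) g'(2) by simp
  moreover have "koszul_dT n g = f"
    unfolding g_def koszul_dT_add koszul_dT_twice F(2) by simp
  ultimately show ?case
    using approx_Z_iff by blast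
qed

lemma approx_H_zero_if_koszul_H_zero:
  assumes "1 \<le> i" "koszul_H_zero n a (Suc i)"
  shows "approx_H_zero n a i"
  unfolding approx_H_zero_def
proof (intro ballI impI)
  fix f assume "f \<in> approx_Z n a i" "koszul_dT n f = (\<lambda>S \<alpha>. 0)"
  moreover obtain m where "T_degree_below n f m"
    using KT_T_degree_below_ex \<open>f \<in> approx_Z n a i\<close> unfolding approx_Z_def by blast
  ultimately show "\<exists>g\<in>approx_Z n a (Suc i). koszul_dT n g = f"
    using approx_boundary_if_T_degree_below[OF assms] by blast
qed

section \<open>Grade and Koszul homology\<close>

lemma grade_regular_seq_ex:
  assumes "enat k \<le> grade J" "1 \<le> k"
  shows "\<exists>xs. set xs \<subseteq> J \<and> regular_seq xs \<and> k \<le> length xs"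
proof -
  have "enat (k - 1) < enat k"
    using assms(2) by simp
  also have "\<dots> \<le> Sup {enat (length xs) | xs. set xs \<subseteq> J \<and> regular_seq xs}"
    using assms(1) unfolding grade_def .
  finally have "enat (k - 1) < Sup {enat (length xs) | xs. set xs \<subseteq> J \<and> regular_seq xs}" .
  then obtain xs where "set xs \<subseteq> J" "regular_seq xs" "enat (k - 1) < enat (length xs)"
    unfolding less_Sup_iff by blast
  then show ?thesis
    by auto
qed

lemma subset_radical: "J \<subseteq> radical J"
proof
  fix x assume "x \<in> J"
  then have "x ^ 1 \<in> J"
    by simp
  then show "x \<in> radical J"
    unfolding radical_def by blast
qed

lemma regular_seq_mod_empty: "regular_seq xs \<Longrightarrow> regular_seq_mod {} xs"
  unfolding regular_seq_def regular_seq_mod_def by simp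

lemma koszul_H_zero_above_grade:
  assumes rad: "radical (ideal_gen (a ` {..<n})) = radical J" and j: "enat n < enat j + grade J"
  shows "koszul_H_zero n a j"
proof (cases "n < j")
  case True
  then show ?thesis
    by (intro koszul_H_zero_if_regular_seq[of "[]"]) (simp_all add: regular_seq_mod_def)
next
  case False
  then have "enat (Suc n - j) \<le> grade J"
    using j by (cases "grade J") auto
  moreover have "1 \<le> Suc n - j"
    using False by simp
  ultimately obtain xs where xs: "set xs \<subseteq> J" "regular_seq xs" "Suc n - j \<le> length xs"
    using grade_regular_seq_ex by blast
  have "set xs \<subseteq> radical (ideal_gen (a ` {..<n}))"
    using xs(1) subset_radical[of J] unfolding rad by blast
  then show ?thesis
    using xs(3) False by (intro koszul_H_zero_if_regular_seq[OF regular_seq_mod_empty[OF xs(2)]]) auto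
qed

theorem mainTheorem7:
  fixes G :: "nat \<Rightarrow> 'a::comm_ring_1 set" and a :: "nat \<Rightarrow> 'a" and n :: nat
  assumes "noetherian_ring TYPE('a)"
    and "nat_graded G"
    and "radical (ideal_gen (a ` {..<n})) = radical (irrelevant_ideal G)"
    and "grade (irrelevant_ideal G) \<ge> 1"
  shows "(\<forall>i. 1 \<le> i \<and> enat n \<le> enat i + grade (irrelevant_ideal G) \<longrightarrow> approx_H_zero n a i)
       \<and> (2 \<le> n \<and> enat n - 1 \<le> grade (irrelevant_ideal G) \<longrightarrow> (\<forall>i\<ge>1. approx_H_zero n a i))"
proof -
  let ?g = "grade (irrelevant_ideal G)"
  have "approx_H_zero n a i" if "1 \<le> i" "enat n \<le> enat i + ?g" for i
  proof -
    have "enat n < enat (Suc i) + ?g"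
      using that(2) by (cases ?g) auto
    then show ?thesis
      using approx_H_zero_if_koszul_H_zero[OF that(1) koszul_H_zero_above_grade[OF assms(3)]] by blast
  qed
  moreover have "enat n \<le> enat i + ?g" if "enat n - 1 \<le> ?g" "1 \<le> i" for i
    using that by (cases ?g) (auto simp: one_enat_def)
  ultimately show ?thesis
    by blast
qed

end
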